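(* Let $G$ be a $3$-edge-colorable cubic graph of order $2n\geq 8$. Then $\chi'_{[n-1]}(G)=4$.
   Context: All graphs are finite, simple (no loops, no parallel edges), connected and cubic. For a positive integer $k$, a $[k]$-matching of $G$ is a matching of $G$ with exactly $k$ edges. The excessive $[k]$-index $\chi'_{[k]}(G)$ is the minimum number of $[k]$-matchings of $G$ whose union is $E(G)$; if some edge of $G$ lies in no $[k]$-matching, one sets $\chi'_{[k]}(G)=\infty$. *)

theory Defs
  imports Main "HOL-Library.Extended_Nat"
begin

definition simple_graph :: "'a set \<Rightarrow> 'a set set \<Rightarrow> bool" where
  "simple_graph V E \<longleftrightarrow> finite V \<and> (\<forall>e\<in>E. \<exists>u v. u \<in> V \<and> v \<in> V \<and> u \<noteq> v \<and> e = {u, v})"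

definition adjacent :: "'a set set \<Rightarrow> 'a \<Rightarrow> 'a \<Rightarrow> bool" where
  "adjacent E u v \<longleftrightarrow> {u, v} \<in> E"

definition connected_graph :: "'a set \<Rightarrow> 'a set set \<Rightarrow> bool" where
  "connected_graph V E \<longleftrightarrow> (\<forall>u\<in>V. \<forall>v\<in>V. (adjacent E)\<^sup>*\<^sup>* u v)"

definition degree :: "'a set set \<Rightarrow> 'a \<Rightarrow> nat" where
  "degree E v = card {e \<in> E. v \<in> e}"

definition cubic :: "'a set \<Rightarrow> 'a set set \<Rightarrow> bool" where
  "cubic V E \<longleftrightarrow> (\<forall>v\<in>V. degree E v = 3)"

definition cubic_graph :: "'a set \<Rightarrow> 'a set set \<Rightarrow> bool" where
  "cubic_graph V E \<longleftrightarrow> simple_graph V E \<and> connected_graph V E \<and> cubic V E"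

definition three_edge_colorable :: "'a set set \<Rightarrow> bool" where
  "three_edge_colorable E \<longleftrightarrow>
     (\<exists>c :: 'a set \<Rightarrow> nat. (\<forall>e\<in>E. c e < 3) \<and>
        (\<forall>e1\<in>E. \<forall>e2\<in>E. e1 \<noteq> e2 \<and> e1 \<inter> e2 \<noteq> {} \<longrightarrow> c e1 \<noteq> c e2))"

definition matching :: "'a set set \<Rightarrow> 'a set set \<Rightarrow> bool" where
  "matching E M \<longleftrightarrow> M \<subseteq> E \<and> (\<forall>e1\<in>M. \<forall>e2\<in>M. e1 \<noteq> e2 \<longrightarrow> e1 \<inter> e2 = {})"

definition k_matching :: "'a set set \<Rightarrow> nat \<Rightarrow> 'a set set \<Rightarrow> bool" where
  "k_matching E k M \<longleftrightarrow> matching E M \<and> card M = k"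

definition excessive_index :: "'a set set \<Rightarrow> nat \<Rightarrow> enat" where
  "excessive_index E k =
     (if \<forall>e\<in>E. \<exists>M. k_matching E k M \<and> e \<in> M
      then enat (LEAST t. \<exists>S. finite S \<and> card S = t \<and> (\<forall>M\<in>S. k_matching E k M) \<and> \<Union>S = E)
      else \<infinity>)"

end

theory Submission
  imports Defs
begin

(* Let G be a connected cubic graph of order 2n >= 8 with a proper 3-edge-colouring.
   Each colour class is a perfect matching with n edges, so |E| = 3n.

   Lower bound: t matchings of size n-1 cover at most t(n-1) edges, and 3(n-1) < 3n,
   so at least four [n-1]-matchings are needed.

   Upper bound: call a path a-f-b a rainbow path if its three edges have distinct colours
   and a, b are disjoint.  Given one, with i the colour of f, at most three edges of
   colour i meet a or b, so a and b extend by n-3 further edges of colour i to an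
   [n-1]-matching N containing some edge e of colour i.  Deleting e, a, b from their
   colour classes gives three more [n-1]-matchings, and together with N they cover E.
   A rainbow path exists: otherwise every 3-coloured path closes to a triangle, which
   forces the component of any vertex to be K4, contradicting connectivity and |V| > 4. *)


lemma k_matching_cover_card:
  assumes "\<forall>M\<in>S. k_matching E k M" and "\<Union>S = E"
  shows "card E \<le> card S * k"
proof -
  have "card E \<le> sum card S"
    using card_Union_le_sum_card[of S] assms(2) by simp
  also have "sum card S = card S * k"
    using assms(1) by (simp add: k_matching_def)
  finally show ?thesis .
qed

lemma four_le_cover_card:
  assumes "card E = 3 * n" "n \<ge> 1"
    and "\<forall>M\<in>S. k_matching E (n - 1) M" "\<Union>S = E"
  shows "4 \<le> card S"
proof (rule ccontr)
  assume "\<not> 4 \<le> card S"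
  then have "card S * (n - 1) \<le> 3 * (n - 1)"
    by (intro mult_le_mono1) simp
  moreover have "3 * (n - 1) < 3 * n"
    using assms(2) by simp
  moreover have "3 * n \<le> card S * (n - 1)"
    using k_matching_cover_card[OF assms(3,4)] assms(1) by simp
  ultimately show False
    by linarith
qed

lemma excessive_index_eqI:
  assumes cover: "finite S" "card S \<le> t" "\<forall>M\<in>S. k_matching E k M" "\<Union>S = E"
    and minimal: "\<And>S. finite S \<Longrightarrow> \<forall>M\<in>S. k_matching E k M \<Longrightarrow> \<Union>S = E \<Longrightarrow> t \<le> card S"
  shows "excessive_index E k = enat t"
proof -
  define P where
    "P t \<longleftrightarrow> (\<exists>S. finite S \<and> card S = t \<and> (\<forall>M\<in>S. k_matching E k M) \<and> \<Union>S = E)" for t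
  have "card S = t"
    using cover minimal[OF cover(1,3,4)] by simp
  then have "P t"
    using cover unfolding P_def by blast
  moreover have "t \<le> s" if "P s" for s
    using that minimal unfolding P_def by blast
  ultimately have "(LEAST t. P t) = t"
    by (rule Least_equality)
  moreover have "\<forall>e\<in>E. \<exists>M. k_matching E k M \<and> e \<in> M"
    using cover(3,4) by blast
  ultimately show ?thesis
    unfolding excessive_index_def P_def by simp
qed

lemma card_four_le: "card {a, b, c, d} \<le> 4"
  by (simp add: card_insert_le_m1 card_insert_if)

lemma connected_closed_set:
  assumes "connected_graph V E" and "x \<in> V" and "x \<in> K"
    and closed: "\<And>e u. e \<in> E \<Longrightarrow> u \<in> e \<Longrightarrow> u \<in> K \<Longrightarrow> e \<subseteq> K"
  shows "V \<subseteq> K"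
proof
  fix v assume "v \<in> V"
  then have "(adjacent E)\<^sup>*\<^sup>* x v"
    using assms(1,2) unfolding connected_graph_def by blast
  then show "v \<in> K"
  proof (induction rule: rtranclp_induct)
    case base
    show ?case using \<open>x \<in> K\<close> .
  next
    case (step u w)
    then have "{u, w} \<in> E" by (simp add: adjacent_def)
    then show ?case using closed[of "{u, w}" u] step.IH by blast
  qed
qed


locale cubic_3_edge_coloured =
  fixes V :: "'a set" and E :: "'a set set" and c :: "'a set \<Rightarrow> nat"
  assumes simple: "simple_graph V E" and cubic: "cubic V E"
    and colour_range: "\<forall>e\<in>E. c e < 3"
    and proper: "\<forall>e1\<in>E. \<forall>e2\<in>E. e1 \<noteq> e2 \<and> e1 \<inter> e2 \<noteq> {} \<longrightarrow> c e1 \<noteq> c e2"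
begin

lemma finite_V: "finite V"
  using simple by (simp add: simple_graph_def)

lemma edge_pair: "e \<in> E \<Longrightarrow> \<exists>p q. p \<in> V \<and> q \<in> V \<and> p \<noteq> q \<and> e = {p, q}"
  using simple by (simp add: simple_graph_def)

lemma edge_other_end:
  assumes "e \<in> E" "u \<in> e"
  shows "\<exists>v. v \<in> V \<and> v \<noteq> u \<and> e = {u, v}"
proof -
  obtain p q where "p \<in> V" "q \<in> V" "p \<noteq> q" "e = {p, q}"
    using edge_pair[OF assms(1)] by blast
  then show ?thesis
    using assms(2) by (cases "u = p") auto
qed

lemma card_edge: "e \<in> E \<Longrightarrow> card e = 2"
  using edge_pair by fastforce

lemma edge_subset: "e \<in> E \<Longrightarrow> e \<subseteq> V"
  using edge_pair by blast

lemma finite_E: "finite E"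
  using finite_subset[of E "Pow V"] edge_subset finite_V by blast

lemma edges_eq_two_common:
  assumes "e \<in> E" "e' \<in> E" "u \<in> e" "v \<in> e" "u \<in> e'" "v \<in> e'" "u \<noteq> v"
  shows "e = e'"
proof -
  obtain p q where "e = {p, q}"
    using edge_pair[OF assms(1)] by blast
  moreover obtain p' q' where "e' = {p', q'}"
    using edge_pair[OF assms(2)] by blast
  ultimately show ?thesis
    using assms(3-7) by auto
qed

lemma same_colour_same_edge:
  "e1 \<in> E \<Longrightarrow> e2 \<in> E \<Longrightarrow> u \<in> e1 \<Longrightarrow> u \<in> e2 \<Longrightarrow> c e1 = c e2 \<Longrightarrow> e1 = e2"
  using proper by blast

(* The three edges at a vertex carry the three colours, so every colour occurs there. *)
lemma colour_at_vertex:
  assumes "v \<in> V" "i < 3"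
  shows "\<exists>e\<in>E. v \<in> e \<and> c e = i"
proof -
  let ?S = "{e\<in>E. v \<in> e}"
  have "card ?S = 3"
    using cubic assms(1) by (simp add: cubic_def degree_def)
  moreover have "inj_on c ?S"
    unfolding inj_on_def using proper by blast
  ultimately have "card (c ` ?S) = 3"
    by (simp add: card_image)
  moreover have "c ` ?S \<subseteq> {..<3}"
    using colour_range by auto
  ultimately have "c ` ?S = {..<3}"
    by (simp add: card_subset_eq)
  then have "i \<in> c ` ?S"
    using assms(2) by simp
  then show ?thesis
    by blast
qed

definition colour_edge :: "'a \<Rightarrow> nat \<Rightarrow> 'a set" where
  "colour_edge v i = (THE e. e \<in> E \<and> v \<in> e \<and> c e = i)"

lemma colour_edge_eq: "e \<in> E \<Longrightarrow> v \<in> e \<Longrightarrow> colour_edge v (c e) = e"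
  unfolding colour_edge_def using same_colour_same_edge by (intro the_equality) auto

lemma colour_edge:
  assumes "v \<in> V" "i < 3"
  shows "colour_edge v i \<in> E" "v \<in> colour_edge v i" "c (colour_edge v i) = i"
  using colour_at_vertex[OF assms] colour_edge_eq by auto

lemma edges_at_vertex:
  assumes "e \<in> E" "u \<in> e"
    and "e0 \<in> E" "e1 \<in> E" "e2 \<in> E" "u \<in> e0" "u \<in> e1" "u \<in> e2"
    and "c e0 = 0" "c e1 = 1" "c e2 = 2"
  shows "e = e0 \<or> e = e1 \<or> e = e2"
proof -
  have "c e = 0 \<or> c e = 1 \<or> c e = 2"
    using colour_range assms(1) by fastforce
  then show ?thesis
    using same_colour_same_edge assms by metis
qed

definition colour_class :: "nat \<Rightarrow> 'a set set" where
  "colour_class i = {e\<in>E. c e = i}"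

lemma colour_class_matching: "matching E (colour_class i)"
  unfolding matching_def colour_class_def using proper by blast

(* Each colour class is a perfect matching, hence has |V|/2 edges. *)
lemma card_colour_class:
  assumes "i < 3"
  shows "card V = 2 * card (colour_class i)"
proof -
  have covers: "\<Union>(colour_class i) = V"
    using colour_at_vertex[OF _ assms] edge_subset unfolding colour_class_def by blast
  have "pairwise disjnt (colour_class i)"
    using colour_class_matching unfolding matching_def pairwise_def disjnt_def by blast
  moreover have "\<And>e. e \<in> colour_class i \<Longrightarrow> finite e"
    using edge_subset finite_V finite_subset unfolding colour_class_def by blast
  ultimately have "card V = sum card (colour_class i)"
    using card_Union_disjoint covers by metis
  also have "\<dots> = 2 * card (colour_class i)"
    using card_edge unfolding colour_class_def by simp
  finally show ?thesis .
qed

lemma card_E: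
  assumes "card V = 2 * n"
  shows "card E = 3 * n"
proof -
  have size: "card (colour_class i) = n" if "i < 3" for i
    using card_colour_class[OF that] assms by simp
  have "E = (\<Union>i<3. colour_class i)"
    using colour_range unfolding colour_class_def by auto
  also have "card \<dots> = (\<Sum>i<3. card (colour_class i))"
    using finite_E by (intro card_UN_disjoint) (auto simp: colour_class_def)
  also have "\<dots> = 3 * n"
    using size by simp
  finally show ?thesis .
qed

lemma colour_class_minus_edge:
  assumes "card V = 2 * n" "e \<in> colour_class i" "i < 3"
  shows "k_matching E (n - 1) (colour_class i - {e})"
  using colour_class_matching[of i] card_colour_class[OF assms(3)] assms(1,2)
  unfolding k_matching_def matching_def by auto

definition rainbow_path :: "'a set \<Rightarrow> 'a set \<Rightarrow> 'a set \<Rightarrow> bool" where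
  "rainbow_path f a b \<longleftrightarrow> f \<in> E \<and> a \<in> E \<and> b \<in> E \<and> c a \<noteq> c f \<and> c b \<noteq> c f \<and> c a \<noteq> c b
     \<and> f \<inter> a \<noteq> {} \<and> f \<inter> b \<noteq> {} \<and> a \<inter> b = {}"

(* Of the edges coloured like f, only f and the ones at the far ends of a and b can
   meet the path. *)
lemma few_class_edges_meet_path:
  assumes "rainbow_path f a b"
  shows "card {g\<in>colour_class (c f). g \<inter> (a \<union> b) \<noteq> {}} \<le> 3"
proof -
  have E: "f \<in> E" "a \<in> E" "b \<in> E"
    using assms unfolding rainbow_path_def by auto
  obtain x y where x: "x \<in> f" "x \<in> a" and y: "y \<in> f" "y \<in> b"
    using assms unfolding rainbow_path_def by blast
  obtain x' y' where a: "a = {x, x'}" and b: "b = {y, y'}"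
    using edge_other_end[OF E(2) x(2)] edge_other_end[OF E(3) y(2)] by blast
  have "{g\<in>colour_class (c f). g \<inter> (a \<union> b) \<noteq> {}}
      \<subseteq> {f, colour_edge x' (c f), colour_edge y' (c f)}"
  proof
    fix g assume "g \<in> {g\<in>colour_class (c f). g \<inter> (a \<union> b) \<noteq> {}}"
    then obtain v where g: "g \<in> colour_class (c f)" and v: "v \<in> g" "v \<in> a \<union> b"
      by blast
    then have g_eq: "colour_edge v (c f) = g"
      using colour_edge_eq unfolding colour_class_def by fastforce
    have "colour_edge x (c f) = f" "colour_edge y (c f) = f"
      using colour_edge_eq E x y by auto
    then show "g \<in> {f, colour_edge x' (c f), colour_edge y' (c f)}"
      using g_eq v a b by auto
  qed
  then have "card {g\<in>colour_class (c f). g \<inter> (a \<union> b) \<noteq> {}}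
      \<le> card {f, colour_edge x' (c f), colour_edge y' (c f)}"
    by (simp add: card_mono)
  also have "\<dots> \<le> 3"
    by (simp add: card_insert_le_m1 card_insert_if)
  finally show ?thesis .
qed

lemma rainbow_path_completion:
  assumes path: "rainbow_path f a b" and n: "card V = 2 * n" "n \<ge> 4"
  shows "\<exists>N e. k_matching E (n - 1) N \<and> a \<in> N \<and> b \<in> N \<and> e \<in> N \<and> e \<in> colour_class (c f)"
proof -
  let ?C = "colour_class (c f)"
  let ?T = "{g\<in>?C. g \<inter> (a \<union> b) \<noteq> {}}"
  have E: "f \<in> E" "a \<in> E" "b \<in> E" and "a \<inter> b = {}"
    using path unfolding rainbow_path_def by auto
  have "card ?C = n"
    using card_colour_class[of "c f"] colour_range E(1) n(1) by simp
  moreover have "card ?T \<le> 3"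
    using few_class_edges_meet_path[OF path] .
  moreover have "finite ?C"
    using finite_E unfolding colour_class_def by simp
  ultimately have "n - 3 \<le> card (?C - ?T)"
    by (simp add: card_Diff_subset)
  then obtain N' where N': "N' \<subseteq> ?C - ?T" "card N' = n - 3" "finite N'"
    by (rule obtain_subset_with_card_n)
  then have "N' \<noteq> {}"
    using n(2) by auto
  then obtain e where e: "e \<in> N'"
    by blast
  have "a \<notin> N'" "b \<notin> N'"
    using N'(1) path unfolding rainbow_path_def colour_class_def by auto
  moreover have "a \<noteq> b"
    using path unfolding rainbow_path_def by auto
  ultimately have card_N: "card (insert a (insert b N')) = n - 1"
    using N'(2,3) n(2) by simp
  have "matching E N'"
    using colour_class_matching N'(1) unfolding matching_def by blast
  then have "matching E (insert a (insert b N'))"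
    using E(2,3) \<open>a \<inter> b = {}\<close> N'(1) unfolding matching_def by blast
  then show ?thesis
    using card_N e N'(1) unfolding k_matching_def by blast
qed

lemma four_matching_cover:
  assumes path: "rainbow_path f a b" and n: "card V = 2 * n" "n \<ge> 4"
  shows "\<exists>S. finite S \<and> card S \<le> 4 \<and> (\<forall>M\<in>S. k_matching E (n - 1) M) \<and> \<Union>S = E"
proof -
  obtain N e where N: "k_matching E (n - 1) N" "a \<in> N" "b \<in> N" "e \<in> N" "e \<in> colour_class (c f)"
    using rainbow_path_completion[OF assms] by blast
  have E: "f \<in> E" "a \<in> E" "b \<in> E"
    using path unfolding rainbow_path_def by auto
  define S where "S = {colour_class (c f) - {e}, colour_class (c a) - {a},
                       colour_class (c b) - {b}, N}"
  have "k_matching E (n - 1) (colour_class (c f) - {e})"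
    using colour_class_minus_edge[OF n(1) N(5)] colour_range E(1) by simp
  moreover have "k_matching E (n - 1) (colour_class (c g) - {g})" if "g \<in> E" for g
    using colour_class_minus_edge[OF n(1), of g "c g"] colour_range that
    by (simp add: colour_class_def)
  ultimately have "\<forall>M\<in>S. k_matching E (n - 1) M"
    unfolding S_def using N(1) E by auto
  moreover have "\<Union>S = E"
  proof
    show "\<Union>S \<subseteq> E"
      using \<open>\<forall>M\<in>S. k_matching E (n - 1) M\<close> unfolding k_matching_def matching_def by blast
  next
    show "E \<subseteq> \<Union>S"
    proof
      fix g assume "g \<in> E"
      have "c g < 3" "c f < 3" "c a < 3" "c b < 3"
        using colour_range E \<open>g \<in> E\<close> by auto
      then have "c g = c f \<or> c g = c a \<or> c g = c b"
        using path unfolding rainbow_path_def by arith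
      moreover have "g \<in> colour_class (c g)"
        using \<open>g \<in> E\<close> by (simp add: colour_class_def)
      ultimately show "g \<in> \<Union>S"
        using N(2-5) unfolding S_def by (elim disjE) (auto simp del: Diff_iff)
    qed
  qed
  moreover have "card S \<le> 4"
    unfolding S_def by (rule card_four_le)
  moreover have "finite S"
    unfolding S_def by simp
  ultimately show ?thesis
    by blast
qed

lemma path_closes_to_triangle:
  assumes no_path: "\<nexists>f a b. rainbow_path f a b"
    and f: "f \<in> E" "f = {x, y}" "x \<noteq> y"
    and jk: "j < 3" "k < 3" "j \<noteq> c f" "k \<noteq> c f" "j \<noteq> k"
  shows "\<exists>z. z \<noteq> x \<and> z \<noteq> y \<and> colour_edge x j = {x, z} \<and> colour_edge y k = {y, z}"
proof -
  have V: "x \<in> V" "y \<in> V"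
    using edge_subset f by auto
  let ?a = "colour_edge x j" and ?b = "colour_edge y k"
  have a: "?a \<in> E" "x \<in> ?a" "c ?a = j" and b: "?b \<in> E" "y \<in> ?b" "c ?b = k"
    using colour_edge V jk by auto
  have "rainbow_path f ?a ?b" if "?a \<inter> ?b = {}"
    unfolding rainbow_path_def using that f(1,2) a b jk by auto
  then obtain z where z: "z \<in> ?a" "z \<in> ?b"
    using no_path by blast
  have "z \<noteq> x"
    using edges_eq_two_common[OF b(1) f(1), of x y] z a b f jk by auto
  moreover have "z \<noteq> y"
    using edges_eq_two_common[OF a(1) f(1), of x y] z a b f jk by auto
  moreover obtain u v where "?a = {x, u}" "?b = {y, v}"
    using edge_other_end[OF a(1,2)] edge_other_end[OF b(1,2)] by blast
  ultimately show ?thesis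
    using z by auto
qed

lemma no_rainbow_path_K4_edges:
  assumes no_path: "\<nexists>f a b. rainbow_path f a b" and "x \<in> V"
  shows "\<exists>y z w. {x, y} \<in> E \<and> c {x, y} = 0 \<and> {z, w} \<in> E \<and> c {z, w} = 0
    \<and> {x, z} \<in> E \<and> c {x, z} = 1 \<and> {y, w} \<in> E \<and> c {y, w} = 1
    \<and> {x, w} \<in> E \<and> c {x, w} = 2 \<and> {y, z} \<in> E \<and> c {y, z} = 2"
proof -
  define f where "f = colour_edge x 0"
  have f: "f \<in> E" "x \<in> f" "c f = 0"
    using colour_edge[OF \<open>x \<in> V\<close>] unfolding f_def by auto
  obtain y where y: "y \<noteq> x" "f = {x, y}"
    using edge_other_end[OF f(1,2)] by blast
  obtain z where z: "colour_edge x 1 = {x, z}" "colour_edge y 2 = {y, z}"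
    using path_closes_to_triangle[OF no_path f(1) y(2), of 1 2] y(1) f(3) by auto
  obtain w where w: "colour_edge x 2 = {x, w}" "colour_edge y 1 = {y, w}"
    using path_closes_to_triangle[OF no_path f(1) y(2), of 2 1] y(1) f(3) by auto
  have "y \<in> V"
    using edge_subset[OF f(1)] y(2) by auto
  have xz: "{x, z} \<in> E" "c {x, z} = 1" and xw: "{x, w} \<in> E" "c {x, w} = 2"
    using colour_edge[OF \<open>x \<in> V\<close>, of 1] colour_edge[OF \<open>x \<in> V\<close>, of 2] z(1) w(1) by simp_all
  have yz: "{y, z} \<in> E" "c {y, z} = 2" and yw: "{y, w} \<in> E" "c {y, w} = 1"
    using colour_edge[OF \<open>y \<in> V\<close>, of 1] colour_edge[OF \<open>y \<in> V\<close>, of 2] z(2) w(2) by simp_all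
  have "z \<in> V"
    using edge_subset[OF xz(1)] by simp
  (* The colour-0 edge {z, p} at z closes a triangle with the colour-1 edge {z, x};
     its third edge is the colour-2 edge at x, namely {x, w}, so p = w. *)
  define g where "g = colour_edge z 0"
  have g: "g \<in> E" "z \<in> g" "c g = 0"
    using colour_edge[OF \<open>z \<in> V\<close>] unfolding g_def by auto
  obtain p where p: "p \<noteq> z" "g = {z, p}"
    using edge_other_end[OF g(1,2)] by blast
  obtain q where q: "q \<noteq> z" "q \<noteq> p" "colour_edge z 1 = {z, q}" "colour_edge p 2 = {p, q}"
    using path_closes_to_triangle[OF no_path g(1) p(2), of 1 2] p(1) g(3) by auto
  have "colour_edge z 1 = {x, z}"
    using colour_edge_eq[OF xz(1)] xz(2) by simp
  moreover have "q \<in> colour_edge z 1"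
    using q(3) by simp
  ultimately have "q = x"
    using q(1) by simp
  have "p \<in> V"
    using edge_subset[OF g(1)] p(2) by auto
  then have "colour_edge p 2 \<in> E" "c (colour_edge p 2) = 2"
    using colour_edge[OF \<open>p \<in> V\<close>, of 2] by simp_all
  moreover have "x \<in> colour_edge p 2"
    using q(4) \<open>q = x\<close> by simp
  ultimately have "colour_edge p 2 = colour_edge x 2"
    using colour_edge_eq[of "colour_edge p 2" x] by simp
  then have "p \<in> {x, w}"
    using colour_edge[OF \<open>p \<in> V\<close>, of 2] w(1) by simp
  then have "p = w"
    using q(2) \<open>q = x\<close> by auto
  then have zw: "{z, w} \<in> E" "c {z, w} = 0"
    using g p by auto
  show ?thesis
    using f y(2) xz xw yz yw zw by (intro exI[of _ y] exI[of _ z] exI[of _ w]) simp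
qed

lemma no_rainbow_path_K4:
  assumes no_path: "\<nexists>f a b. rainbow_path f a b" and "x \<in> V"
  shows "\<exists>K. x \<in> K \<and> finite K \<and> card K \<le> 4 \<and> (\<forall>e\<in>E. \<forall>u\<in>e. u \<in> K \<longrightarrow> e \<subseteq> K)"
proof -
  obtain y z w where xy: "{x, y} \<in> E" "c {x, y} = 0" and zw: "{z, w} \<in> E" "c {z, w} = 0"
    and xz: "{x, z} \<in> E" "c {x, z} = 1" and yw: "{y, w} \<in> E" "c {y, w} = 1"
    and xw: "{x, w} \<in> E" "c {x, w} = 2" and yz: "{y, z} \<in> E" "c {y, z} = 2"
    using no_rainbow_path_K4_edges[OF assms] by blast
  define K where "K = {x, y, z, w}"
  (* Each vertex of K has its three coloured edges inside K. *)
  have closed: "e \<subseteq> K" if "e \<in> E" "u \<in> e" "u \<in> K" for e u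
  proof -
    have "u = x \<or> u = y \<or> u = z \<or> u = w"
      using that(3) unfolding K_def by auto
    then have "e \<in> {{x, y}, {x, z}, {x, w}, {y, z}, {y, w}, {z, w}}"
    proof (elim disjE)
      assume "u = x"
      then show ?thesis
        using edges_at_vertex[OF that(1,2) xy(1) xz(1) xw(1)] xy xz xw by auto
    next
      assume "u = y"
      then show ?thesis
        using edges_at_vertex[OF that(1,2) xy(1) yw(1) yz(1)] xy yw yz by auto
    next
      assume "u = z"
      then show ?thesis
        using edges_at_vertex[OF that(1,2) zw(1) xz(1) yz(1)] zw xz yz by auto
    next
      assume "u = w"
      then show ?thesis
        using edges_at_vertex[OF that(1,2) zw(1) yw(1) xw(1)] zw yw xw by auto
    qed
    then show ?thesis
      unfolding K_def by auto
  qed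
  moreover have "x \<in> K" "finite K" "card K \<le> 4"
    unfolding K_def using card_four_le by simp_all
  ultimately show ?thesis
    by blast
qed

lemma rainbow_path_exists:
  assumes "connected_graph V E" and "card V > 4"
  shows "\<exists>f a b. rainbow_path f a b"
proof (rule ccontr)
  assume no_path: "\<nexists>f a b. rainbow_path f a b"
  have "V \<noteq> {}"
    using assms(2) by auto
  then obtain x where "x \<in> V"
    by blast
  obtain K where K: "x \<in> K" "finite K" "card K \<le> 4" "\<forall>e\<in>E. \<forall>u\<in>e. u \<in> K \<longrightarrow> e \<subseteq> K"
    using no_rainbow_path_K4[OF no_path \<open>x \<in> V\<close>] by blast
  have "V \<subseteq> K"
    using connected_closed_set[OF assms(1) \<open>x \<in> V\<close> K(1)] K(4) by simp
  then have "card V \<le> 4"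
    using card_mono[OF K(2)] K(3) by (meson le_trans)
  then show False
    using assms(2) by simp
qed

end


theorem proposition3:
  fixes V :: "'a set" and E :: "'a set set" and n :: nat
  assumes "cubic_graph V E"
    and "three_edge_colorable E"
    and "card V = 2 * n"
    and "2 * n \<ge> 8"
  shows "excessive_index E (n - 1) = 4"
proof -
  obtain c :: "'a set \<Rightarrow> nat" where "\<forall>e\<in>E. c e < 3"
    "\<forall>e1\<in>E. \<forall>e2\<in>E. e1 \<noteq> e2 \<and> e1 \<inter> e2 \<noteq> {} \<longrightarrow> c e1 \<noteq> c e2"
    using assms(2) unfolding three_edge_colorable_def by blast
  moreover have graph: "simple_graph V E" "connected_graph V E" "cubic V E"
    using assms(1) unfolding cubic_graph_def by auto
  ultimately interpret cubic_3_edge_coloured V E c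
    by unfold_locales auto
  have n: "n \<ge> 4"
    using assms(4) by simp
  have "card V > 4"
    using assms(3,4) by simp
  then obtain f a b where path: "rainbow_path f a b"
    using rainbow_path_exists[OF graph(2)] by blast
  obtain S where S: "finite S" "card S \<le> 4" "\<forall>M\<in>S. k_matching E (n - 1) M" "\<Union>S = E"
    using four_matching_cover[OF path assms(3) n] by blast
  have "4 \<le> card S'"
    if "finite S'" "\<forall>M\<in>S'. k_matching E (n - 1) M" "\<Union>S' = E" for S'
    using four_le_cover_card[OF card_E[OF assms(3)] _ that(2,3)] n by simp
  then have "excessive_index E (n - 1) = enat 4"
    by (rule excessive_index_eqI[OF S])
  then show ?thesis
    by (simp add: numeral_eq_enat)
qed

end
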